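(* Let $\eta,\sigma>0$, $\kappa>0$, $\rho\in(-1,1)$, $b<1$ with $b\ne0$, and $K=[\alpha,\beta]$ with $-\infty\le\alpha<\beta\le\infty$. Set $B_-=\frac{(1-b)\alpha-\eta}\sigma$ and $B_+=\frac{(1-b)\beta-\eta}\sigma$. Then for every $B\in\mathbb R$ a minimiser of $\lambda\mapsto2(1-b)\delta_K(\lambda)+(\eta+\lambda+\sigma\rho B)^2$ over $\lambda\in\mathbb R$ is $$\lambda^\ast(B)=[(1-b)\alpha-(\eta+\sigma\rho B)]\mathbf 1_{\{\rho B<B_-\}}+[(1-b)\beta-(\eta+\sigma\rho B)]\mathbf 1_{\{\rho B>B_+\}}.$$ Moreover, a function $B$ solves $$B'(\tau)=-\kappa B(\tau)+\tfrac12\sigma^2B(\tau)^2+\tfrac12\tfrac b{1-b}\inf_{\lambda\in\mathbb R}\Big(2(1-b)\delta_K(\lambda)+(\eta+\lambda+\sigma\rho B(\tau))^2\Big),\quad B(0)=0,$$ if and only if $B(0)=0$ and $$B'(\tau)=\big(-r_0^-+r_1^-B+\tfrac12r_2^-B^2\big)\mathbf 1_{\{\rho B<B_-\}}+\big(-r_0+r_1B+\tfrac12r_2B^2\big)\mathbf 1_{\{B_-\le\rho B\le B_+\}}+\big(-r_0^++r_1^+B+\tfrac12r_2^+B^2\big)\mathbf 1_{\{B_+<\rho B\}},$$ where $B=B(\tau)$ on the right-hand side.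
   Context: $\delta_K(x)=-\inf_{y\in K}xy=-\alpha x\mathbf 1_{\{x>0\}}-\beta x\mathbf 1_{\{x<0\}}$ is the support function of $K$. Coefficients: $r_0^-=\tfrac12 b\alpha((1-b)\alpha-2\eta)$, $r_1^-=b\sigma\rho\alpha-\kappa$, $r_2^-=\sigma^2$; $r_0=-\frac b{2(1-b)}\eta^2$, $r_1=\frac b{1-b}\eta\sigma\rho-\kappa$, $r_2=\sigma^2(1+\frac b{1-b}\rho^2)$; $r_0^+=\tfrac12 b\beta((1-b)\beta-2\eta)$, $r_1^+=b\sigma\rho\beta-\kappa$, $r_2^+=\sigma^2$. (These arise from a constrained CRRA portfolio problem in Heston's model, with $\eta$ the market-price-of-risk coefficient, $\kappa$ the mean-reversion speed, $\sigma$ the vol-of-vol and $\rho$ the correlation.) *)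

theory Defs
  imports "HOL-Analysis.Analysis"
begin

text \<open>K = [alpha, beta] with -infinity <= alpha < beta <= infinity, so alpha, beta are
extended reals. Support function delta_K(x) = - inf_{y in K} x y
= - alpha x 1_{x>0} - beta x 1_{x<0} (value +infinity allowed).\<close>

definition deltaK :: "ereal \<Rightarrow> ereal \<Rightarrow> real \<Rightarrow> ereal" where
  "deltaK \<alpha> \<beta> x =
     (if x > 0 then - (\<alpha> * ereal x) else if x < 0 then - (\<beta> * ereal x) else 0)"

definition objK :: "ereal \<Rightarrow> ereal \<Rightarrow> real \<Rightarrow> real \<Rightarrow> real \<Rightarrow> real \<Rightarrow> real \<Rightarrow> real \<Rightarrow> ereal" where
  "objK \<alpha> \<beta> \<eta> \<sigma> \<rho> b B l =
     ereal (2 * (1 - b)) * deltaK \<alpha> \<beta> l + ereal ((\<eta> + l + \<sigma> * \<rho> * B)^2)"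

definition Bminus :: "ereal \<Rightarrow> real \<Rightarrow> real \<Rightarrow> real \<Rightarrow> ereal" where
  "Bminus \<alpha> \<eta> \<sigma> b = (ereal (1 - b) * \<alpha> - ereal \<eta>) / ereal \<sigma>"

definition Bplus :: "ereal \<Rightarrow> real \<Rightarrow> real \<Rightarrow> real \<Rightarrow> ereal" where
  "Bplus \<beta> \<eta> \<sigma> b = (ereal (1 - b) * \<beta> - ereal \<eta>) / ereal \<sigma>"

text \<open>In each branch the relevant endpoint is finite
(rho B < B_- forces alpha > -infinity, rho B > B_+ forces beta < infinity), so
real_of_ereal there is the endpoint itself; a false indicator kills the term.\<close>
definition lamstar :: "ereal \<Rightarrow> ereal \<Rightarrow> real \<Rightarrow> real \<Rightarrow> real \<Rightarrow> real \<Rightarrow> real \<Rightarrow> real" where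
  "lamstar \<alpha> \<beta> \<eta> \<sigma> \<rho> b B =
     (if ereal (\<rho> * B) < Bminus \<alpha> \<eta> \<sigma> b
        then (1 - b) * real_of_ereal \<alpha> - (\<eta> + \<sigma> * \<rho> * B) else 0)
   + (if ereal (\<rho> * B) > Bplus \<beta> \<eta> \<sigma> b
        then (1 - b) * real_of_ereal \<beta> - (\<eta> + \<sigma> * \<rho> * B) else 0)"

definition r0m :: "real \<Rightarrow> real \<Rightarrow> real \<Rightarrow> real" where
  "r0m \<alpha> \<eta> b = 1/2 * b * \<alpha> * ((1 - b) * \<alpha> - 2 * \<eta>)"
definition r1m :: "real \<Rightarrow> real \<Rightarrow> real \<Rightarrow> real \<Rightarrow> real \<Rightarrow> real" where
  "r1m \<alpha> \<sigma> \<rho> \<kappa> b = b * \<sigma> * \<rho> * \<alpha> - \<kappa>"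
definition r2m :: "real \<Rightarrow> real" where
  "r2m \<sigma> = \<sigma>^2"

definition r0 :: "real \<Rightarrow> real \<Rightarrow> real" where
  "r0 \<eta> b = - (b / (2 * (1 - b))) * \<eta>^2"
definition r1 :: "real \<Rightarrow> real \<Rightarrow> real \<Rightarrow> real \<Rightarrow> real \<Rightarrow> real" where
  "r1 \<eta> \<sigma> \<rho> \<kappa> b = b / (1 - b) * \<eta> * \<sigma> * \<rho> - \<kappa>"
definition r2 :: "real \<Rightarrow> real \<Rightarrow> real \<Rightarrow> real" where
  "r2 \<sigma> \<rho> b = \<sigma>^2 * (1 + b / (1 - b) * \<rho>^2)"

definition r0p :: "real \<Rightarrow> real \<Rightarrow> real \<Rightarrow> real" where
  "r0p \<beta> \<eta> b = 1/2 * b * \<beta> * ((1 - b) * \<beta> - 2 * \<eta>)"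
definition r1p :: "real \<Rightarrow> real \<Rightarrow> real \<Rightarrow> real \<Rightarrow> real \<Rightarrow> real" where
  "r1p \<beta> \<sigma> \<rho> \<kappa> b = b * \<sigma> * \<rho> * \<beta> - \<kappa>"
definition r2p :: "real \<Rightarrow> real" where
  "r2p \<sigma> = \<sigma>^2"

text \<open>Right-hand side of the original ODE (extended-real valued because of the infimum).\<close>
definition rhs_inf :: "ereal \<Rightarrow> ereal \<Rightarrow> real \<Rightarrow> real \<Rightarrow> real \<Rightarrow> real \<Rightarrow> real \<Rightarrow> real \<Rightarrow> ereal" where
  "rhs_inf \<alpha> \<beta> \<eta> \<sigma> \<rho> \<kappa> b x =
     ereal (- \<kappa> * x + 1/2 * \<sigma>^2 * x^2)
     + ereal (1/2 * (b / (1 - b))) * (INF l::real. objK \<alpha> \<beta> \<eta> \<sigma> \<rho> b x l)"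

definition rhs_pw :: "ereal \<Rightarrow> ereal \<Rightarrow> real \<Rightarrow> real \<Rightarrow> real \<Rightarrow> real \<Rightarrow> real \<Rightarrow> real \<Rightarrow> real" where
  "rhs_pw \<alpha> \<beta> \<eta> \<sigma> \<rho> \<kappa> b x =
     (if ereal (\<rho> * x) < Bminus \<alpha> \<eta> \<sigma> b
        then - r0m (real_of_ereal \<alpha>) \<eta> b + r1m (real_of_ereal \<alpha>) \<sigma> \<rho> \<kappa> b * x
             + 1/2 * r2m \<sigma> * x^2 else 0)
   + (if Bminus \<alpha> \<eta> \<sigma> b \<le> ereal (\<rho> * x) \<and> ereal (\<rho> * x) \<le> Bplus \<beta> \<eta> \<sigma> b
        then - r0 \<eta> b + r1 \<eta> \<sigma> \<rho> \<kappa> b * x + 1/2 * r2 \<sigma> \<rho> b * x^2 else 0)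
   + (if Bplus \<beta> \<eta> \<sigma> b < ereal (\<rho> * x)
        then - r0p (real_of_ereal \<beta>) \<eta> b + r1p (real_of_ereal \<beta>) \<sigma> \<rho> \<kappa> b * x
             + 1/2 * r2p \<sigma> * x^2 else 0)"

end

(* With c = \<eta> + \<sigma> \<rho> B and A = 1 - b > 0, every y \<in> K gives \<delta>_K(\<lambda>) \<ge> -y \<lambda>, so completing the square yields
     2 A \<delta>_K(\<lambda>) + (c + \<lambda>)^2 \<ge> (c + \<lambda> - A y)^2 + A y (2 c - A y) \<ge> A y (2 c - A y).
   For y the projection of c / A onto K and \<lambda> = A y - c both inequalities are equalities, because
   \<lambda> > 0 forces y = \<alpha> and \<lambda> < 0 forces y = \<beta>.  This \<lambda> is \<lambda>*(B), and in the three regimes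
   c / A < \<alpha>, c / A \<in> K, c / A > \<beta> (that is, \<rho> B < B_-, B_- \<le> \<rho> B \<le> B_+, \<rho> B > B_+) the minimum
   A y (2 c - A y) turns the right-hand side of the ODE into the piecewise Riccati one, so the two
   ODEs coincide. *)

theory Submission imports Defs begin

(* Only finite endpoints are ever returned when \<alpha> < \<beta>, so real_of_ereal never yields its junk value 0. *)

definition clamp_ereal :: "ereal \<Rightarrow> ereal \<Rightarrow> real \<Rightarrow> real" where
  "clamp_ereal \<alpha> \<beta> t =
     (if ereal t < \<alpha> then real_of_ereal \<alpha> else if \<beta> < ereal t then real_of_ereal \<beta> else t)"

lemma clamp_ereal_mem:
  assumes "\<alpha> < \<beta>"
  shows "\<alpha> \<le> ereal (clamp_ereal \<alpha> \<beta> t)" and "ereal (clamp_ereal \<alpha> \<beta> t) \<le> \<beta>"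
  using assms by (cases \<alpha>; cases \<beta>; auto simp: clamp_ereal_def)+

lemma clamp_ereal_active_endpoint:
  assumes "\<alpha> < \<beta>"
  shows "t < clamp_ereal \<alpha> \<beta> t \<Longrightarrow> \<alpha> = ereal (clamp_ereal \<alpha> \<beta> t)"
    and "clamp_ereal \<alpha> \<beta> t < t \<Longrightarrow> \<beta> = ereal (clamp_ereal \<alpha> \<beta> t)"
  using assms by (cases \<alpha>; cases \<beta>; auto simp: clamp_ereal_def split: if_splits)+

lemma deltaK_ge_linear:
  assumes "\<alpha> \<le> ereal y" and "ereal y \<le> \<beta>"
  shows "ereal (- (y * l)) \<le> deltaK \<alpha> \<beta> l"
  using assms by (cases \<alpha>; cases \<beta>) (auto simp: deltaK_def mult_right_mono mult_right_mono_neg)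

lemma deltaK_eq_linear:
  assumes "l > 0 \<Longrightarrow> \<alpha> = ereal y" and "l < 0 \<Longrightarrow> \<beta> = ereal y"
  shows "deltaK \<alpha> \<beta> l = ereal (- (y * l))"
  using assms by (auto simp: deltaK_def)

lemma less_Bminus_iff:
  assumes "\<sigma> > 0" and "b < 1"
  shows "ereal (\<rho> * x) < Bminus \<alpha> \<eta> \<sigma> b \<longleftrightarrow> ereal ((\<eta> + \<sigma> * \<rho> * x) / (1 - b)) < \<alpha>"
  using assms
  by (cases \<alpha>) (auto simp: Bminus_def pos_less_divide_eq pos_divide_less_eq algebra_simps)

lemma Bplus_less_iff:
  assumes "\<sigma> > 0" and "b < 1"
  shows "Bplus \<beta> \<eta> \<sigma> b < ereal (\<rho> * x) \<longleftrightarrow> \<beta> < ereal ((\<eta> + \<sigma> * \<rho> * x) / (1 - b))"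
  using assms
  by (cases \<beta>) (auto simp: Bplus_def pos_less_divide_eq pos_divide_less_eq algebra_simps)

lemma lamstar_eq_clamp:
  assumes "\<sigma> > 0" and "b < 1" and "\<alpha> < \<beta>"
  shows "lamstar \<alpha> \<beta> \<eta> \<sigma> \<rho> b x
    = (1 - b) * clamp_ereal \<alpha> \<beta> ((\<eta> + \<sigma> * \<rho> * x) / (1 - b)) - (\<eta> + \<sigma> * \<rho> * x)"
proof -
  let ?t = "(\<eta> + \<sigma> * \<rho> * x) / (1 - b)"
  have "\<not> (ereal ?t < \<alpha> \<and> \<beta> < ereal ?t)" using assms(3) by auto
  moreover have "(1 - b) * ?t = \<eta> + \<sigma> * \<rho> * x" using assms(2) by simp
  ultimately show ?thesis
    using assms by (auto simp: lamstar_def clamp_ereal_def less_Bminus_iff Bplus_less_iff)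
qed

lemma objK_ge:
  fixes \<eta> \<sigma> \<rho> b x y l :: real and \<alpha> \<beta> :: ereal
  assumes "b < 1" and "\<alpha> \<le> ereal y" and "ereal y \<le> \<beta>"
  defines "c \<equiv> \<eta> + \<sigma> * \<rho> * x" and "p \<equiv> (1 - b) * y"
  shows "ereal (p * (2 * c - p)) \<le> objK \<alpha> \<beta> \<eta> \<sigma> \<rho> b x l"
proof -
  have support: "ereal (2 * (1 - b)) * ereal (- (y * l)) \<le> ereal (2 * (1 - b)) * deltaK \<alpha> \<beta> l"
    using assms(1) by (intro ereal_mult_left_mono deltaK_ge_linear assms(2,3)) simp
  have shift: "\<eta> + l + \<sigma> * \<rho> * x = c + l" by (simp add: c_def)
  have "p * (2 * c - p) \<le> 2 * (1 - b) * (- (y * l)) + (c + l)\<^sup>2"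
    using zero_le_power2[of "c + l - p"] by (simp add: p_def power2_eq_square algebra_simps)
  then have "ereal (p * (2 * c - p)) \<le> ereal (2 * (1 - b)) * ereal (- (y * l)) + ereal ((c + l)\<^sup>2)"
    by simp
  also have "\<dots> \<le> objK \<alpha> \<beta> \<eta> \<sigma> \<rho> b x l"
    unfolding objK_def shift by (rule add_right_mono[OF support])
  finally show ?thesis .
qed

lemma objK_eq_at_active_endpoint:
  fixes \<eta> \<sigma> \<rho> b x y l :: real and \<alpha> \<beta> :: ereal
  assumes "l > 0 \<Longrightarrow> \<alpha> = ereal y" and "l < 0 \<Longrightarrow> \<beta> = ereal y"
  defines "c \<equiv> \<eta> + \<sigma> * \<rho> * x" and "p \<equiv> (1 - b) * y"
  assumes "l = p - c"
  shows "objK \<alpha> \<beta> \<eta> \<sigma> \<rho> b x l = ereal (p * (2 * c - p))"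
proof -
  have "objK \<alpha> \<beta> \<eta> \<sigma> \<rho> b x l = ereal (2 * (1 - b) * (- (y * l)) + (c + l)\<^sup>2)"
    using deltaK_eq_linear[of l \<alpha> y \<beta>, OF assms(1,2)] by (simp add: objK_def c_def add_ac)
  also have "\<dots> = ereal (p * (2 * c - p))"
    unfolding assms(5) p_def by (simp add: power2_eq_square algebra_simps)
  finally show ?thesis .
qed

definition objK_min :: "ereal \<Rightarrow> ereal \<Rightarrow> real \<Rightarrow> real \<Rightarrow> real \<Rightarrow> real \<Rightarrow> real \<Rightarrow> real" where
  "objK_min \<alpha> \<beta> \<eta> \<sigma> \<rho> b x =
     (let c = \<eta> + \<sigma> * \<rho> * x; p = (1 - b) * clamp_ereal \<alpha> \<beta> (c / (1 - b)) in p * (2 * c - p))"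

lemma objK_min_le_objK:
  assumes "b < 1" and "\<alpha> < \<beta>"
  shows "ereal (objK_min \<alpha> \<beta> \<eta> \<sigma> \<rho> b x) \<le> objK \<alpha> \<beta> \<eta> \<sigma> \<rho> b x l"
  using objK_ge[OF assms(1) clamp_ereal_mem[OF assms(2)]] by (simp add: objK_min_def Let_def)

lemma objK_lamstar:
  assumes "\<sigma> > 0" and "b < 1" and "\<alpha> < \<beta>"
  shows "objK \<alpha> \<beta> \<eta> \<sigma> \<rho> b x (lamstar \<alpha> \<beta> \<eta> \<sigma> \<rho> b x) = ereal (objK_min \<alpha> \<beta> \<eta> \<sigma> \<rho> b x)"
proof -
  let ?c = "\<eta> + \<sigma> * \<rho> * x"
  let ?y = "clamp_ereal \<alpha> \<beta> (?c / (1 - b))"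
  have lower: "\<alpha> = ereal ?y" if "(1 - b) * ?y - ?c > 0"
    using that assms(2) by (intro clamp_ereal_active_endpoint(1)[OF assms(3)])
      (simp add: pos_divide_less_eq mult.commute)
  have upper: "\<beta> = ereal ?y" if "(1 - b) * ?y - ?c < 0"
    using that assms(2) by (intro clamp_ereal_active_endpoint(2)[OF assms(3)])
      (simp add: pos_less_divide_eq mult.commute)
  show ?thesis
    using objK_eq_at_active_endpoint[OF lower upper refl] lamstar_eq_clamp[OF assms]
    by (simp add: objK_min_def Let_def)
qed

lemma riccati_interior_eq:
  "- r0 \<eta> b + r1 \<eta> \<sigma> \<rho> \<kappa> b * x + 1/2 * r2 \<sigma> \<rho> b * x\<^sup>2
   = - \<kappa> * x + 1/2 * \<sigma>\<^sup>2 * x\<^sup>2 + 1/2 * (b / (1 - b)) * (\<eta> + \<sigma> * \<rho> * x)\<^sup>2"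
proof -
  define q where "q = b / (1 - b)"
  have half: "b / (2 * (1 - b)) = q / 2" by (simp add: q_def)
  show ?thesis
    unfolding r0_def r1_def r2_def half q_def[symmetric] by (simp add: power2_eq_square algebra_simps)
qed

lemma rhs_pw_eq_objK_min:
  assumes "\<sigma> > 0" and "b < 1" and "\<alpha> < \<beta>"
  shows "rhs_pw \<alpha> \<beta> \<eta> \<sigma> \<rho> \<kappa> b x
    = - \<kappa> * x + 1/2 * \<sigma>\<^sup>2 * x\<^sup>2 + 1/2 * (b / (1 - b)) * objK_min \<alpha> \<beta> \<eta> \<sigma> \<rho> b x"
proof -
  let ?t = "(\<eta> + \<sigma> * \<rho> * x) / (1 - b)"
  have "b \<noteq> 1" using assms(2) by simp
  have interior_iff: "(Bminus \<alpha> \<eta> \<sigma> b \<le> ereal (\<rho> * x) \<and> ereal (\<rho> * x) \<le> Bplus \<beta> \<eta> \<sigma> b)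
      \<longleftrightarrow> \<not> ereal ?t < \<alpha> \<and> \<not> \<beta> < ereal ?t"
    using less_Bminus_iff[OF assms(1,2)] Bplus_less_iff[OF assms(1,2)] by (simp add: not_less[symmetric])
  note regimes = less_Bminus_iff[OF assms(1,2)] Bplus_less_iff[OF assms(1,2)] interior_iff
  consider (lower) a where "\<alpha> = ereal a" "?t < a"
    | (upper) c where "\<beta> = ereal c" "c < ?t"
    | (interior) "\<not> ereal ?t < \<alpha>" "\<not> \<beta> < ereal ?t"
    using assms(3) by (cases \<alpha>; cases \<beta>) auto
  then show ?thesis
  proof cases
    case lower
    then have "\<not> \<beta> < ereal ?t" using assms(3) by (cases \<beta>) auto
    with lower \<open>b \<noteq> 1\<close> show ?thesis
      unfolding rhs_pw_def objK_min_def Let_def clamp_ereal_def regimes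
      by (simp add: r0m_def r1m_def r2m_def field_simps power2_eq_square)
  next
    case upper
    then have "\<not> ereal ?t < \<alpha>" using assms(3) by (cases \<alpha>) auto
    with upper \<open>b \<noteq> 1\<close> show ?thesis
      unfolding rhs_pw_def objK_min_def Let_def clamp_ereal_def regimes
      by (simp add: r0p_def r1p_def r2p_def field_simps power2_eq_square)
  next
    case interior
    then have "rhs_pw \<alpha> \<beta> \<eta> \<sigma> \<rho> \<kappa> b x = - r0 \<eta> b + r1 \<eta> \<sigma> \<rho> \<kappa> b * x + 1/2 * r2 \<sigma> \<rho> b * x\<^sup>2"
      unfolding rhs_pw_def regimes by simp
    moreover have "objK_min \<alpha> \<beta> \<eta> \<sigma> \<rho> b x = (\<eta> + \<sigma> * \<rho> * x)\<^sup>2"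
      using interior \<open>b \<noteq> 1\<close> by (simp add: objK_min_def clamp_ereal_def power2_eq_square)
    ultimately show ?thesis by (simp only: riccati_interior_eq)
  qed
qed

lemma rhs_inf_eq_rhs_pw:
  assumes "\<sigma> > 0" and "b < 1" and "\<alpha> < \<beta>"
  shows "rhs_inf \<alpha> \<beta> \<eta> \<sigma> \<rho> \<kappa> b x = ereal (rhs_pw \<alpha> \<beta> \<eta> \<sigma> \<rho> \<kappa> b x)"
proof -
  have "(INF l. objK \<alpha> \<beta> \<eta> \<sigma> \<rho> b x l) = ereal (objK_min \<alpha> \<beta> \<eta> \<sigma> \<rho> b x)"
  proof (rule INF_eqI)
    show "ereal (objK_min \<alpha> \<beta> \<eta> \<sigma> \<rho> b x) \<le> objK \<alpha> \<beta> \<eta> \<sigma> \<rho> b x l" for l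
      using objK_min_le_objK[OF assms(2,3)] .
    show "y \<le> ereal (objK_min \<alpha> \<beta> \<eta> \<sigma> \<rho> b x)"
      if "\<And>l. l \<in> UNIV \<Longrightarrow> y \<le> objK \<alpha> \<beta> \<eta> \<sigma> \<rho> b x l" for y
      using that[of "lamstar \<alpha> \<beta> \<eta> \<sigma> \<rho> b x"] by (simp add: objK_lamstar[OF assms])
  qed
  then show ?thesis by (simp add: rhs_inf_def rhs_pw_eq_objK_min[OF assms])
qed

theorem lemma2p3:
  fixes \<eta> \<sigma> \<kappa> \<rho> b :: real and \<alpha> \<beta> :: ereal
  assumes "\<eta> > 0" and "\<sigma> > 0" and "\<kappa> > 0" and "-1 < \<rho>" and "\<rho> < 1"
    and "b < 1" and "b \<noteq> 0" and "\<alpha> < \<beta>"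
  shows "(\<forall>B l. objK \<alpha> \<beta> \<eta> \<sigma> \<rho> b B (lamstar \<alpha> \<beta> \<eta> \<sigma> \<rho> b B)
                  \<le> objK \<alpha> \<beta> \<eta> \<sigma> \<rho> b B l)
    \<and> (\<forall>(T::real) (Bf::real \<Rightarrow> real). T > 0 \<longrightarrow>
         ((Bf 0 = 0 \<and> (\<forall>\<tau>\<in>{0..T}. \<exists>D. (Bf has_real_derivative D) (at \<tau> within {0..T})
                \<and> ereal D = rhs_inf \<alpha> \<beta> \<eta> \<sigma> \<rho> \<kappa> b (Bf \<tau>)))
          \<longleftrightarrow>
          (Bf 0 = 0 \<and> (\<forall>\<tau>\<in>{0..T}.
                (Bf has_real_derivative rhs_pw \<alpha> \<beta> \<eta> \<sigma> \<rho> \<kappa> b (Bf \<tau>)) (at \<tau> within {0..T})))))"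
proof -
  have "objK \<alpha> \<beta> \<eta> \<sigma> \<rho> b B (lamstar \<alpha> \<beta> \<eta> \<sigma> \<rho> b B) \<le> objK \<alpha> \<beta> \<eta> \<sigma> \<rho> b B l"
    for B l
    using objK_min_le_objK[OF assms(6,8)] by (simp add: objK_lamstar[OF assms(2,6,8)])
  moreover have "rhs_inf \<alpha> \<beta> \<eta> \<sigma> \<rho> \<kappa> b x = ereal (rhs_pw \<alpha> \<beta> \<eta> \<sigma> \<rho> \<kappa> b x)" for x
    using rhs_inf_eq_rhs_pw[OF assms(2,6,8)] .
  ultimately show ?thesis by auto
qed

end
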